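(* Let $f^{\pm},g^{\pm}:\mathbb{R}^2\to\mathbb{R}$ and $H:\mathbb{R}^2\times\mathbb{R}\to\mathbb{R}$ be $C^2$, and consider for $\varepsilon>0$ the Filippov system $(\dot x,\dot y)=(f^{+},g^{+})(x,y)$ if $H(x,y,\varepsilon)>0$ and $(\dot x,\dot y)=(f^{-},g^{-})(x,y)$ if $H(x,y,\varepsilon)<0$. Assume $f^-(0)=g^-(0)=0$, $H(0)=0$, $H_x(0)=0$, $H_y(0)\ne0$, $$H_y(0)g^+(0)<0,\qquad g^-_x(0)\neq0,\qquad (f^-_x(0),g^-_x(0))\ \text{not parallel to}\ (f^+(0),g^+(0)).$$ Then there exist $r>0$, $\varepsilon_0>0$ such that for each $0<\varepsilon\le\varepsilon_0$ there is a unique point $(A(\varepsilon),B(\varepsilon))\in[-r,r]^2$ with $$H(A,B,\varepsilon)=0,\qquad H_x(A,B,\varepsilon)f^-(A,B)+H_y(A,B,\varepsilon)g^-(A,B)=0,$$ and $\varepsilon\mapsto(A(\varepsilon),B(\varepsilon))$ is $C^1$ with $(A(0),B(0))=(0,0)$. Moreover: 1) $(A'(0),B'(0))=\dfrac{H_\varepsilon(0)}{H_y(0)}\Big(\dfrac{g^-_y(0)}{g^-_x(0)},-1\Big)$. 2) $L\setminus\{(A(\varepsilon),B(\varepsilon))\}=L_{sliding}\cup L_{crossing}$, where $L=\{(x,y)\in[-r,r]^2:H(x,y,\varepsilon)=0\}$, $L_{sliding}=\{(x,y)\in L: H_xf^-+H_yg^->0\}$, $L_{crossing}=\{(x,y)\in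 L: H_xf^-+H_yg^-<0\}$ (with $H_x,H_y$ evaluated at $(x,y,\varepsilon)$ and $f^-,g^-$ at $(x,y)$). 3) The system $f^-(a,b)-\lambda f^+(a,b)=0$, $g^-(a,b)-\lambda g^+(a,b)=0$, $H(a,b,\varepsilon)=0$ has, near $(0,0,0)$, a unique $C^1$ solution $(a(\varepsilon),b(\varepsilon),\lambda(\varepsilon))$ with $(a,b,\lambda)(0)=0$, and $$(a'(0),b'(0),\lambda'(0))=\frac{H_\varepsilon(0)}{H_y(0)}\left(\frac{f^-_y(0)g^+(0)-g^-_y(0)f^+(0)}{f^-_x(0)g^+(0)-g^-_x(0)f^+(0)},\,-1,\,-\frac{f^-_x(0)g^-_y(0)-f^-_y(0)g^-_x(0)}{f^-_x(0)g^+(0)-g^-_x(0)f^+(0)}\right).$$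
   Context: Subscripts denote partial derivatives; "$(0)$" means evaluation at the origin (and $\varepsilon=0$ for $H$). The solutions $(a(\varepsilon),b(\varepsilon))$ of the system in 3) are the equilibria (pseudo-equilibria) of the Filippov sliding vector field on the switching curve $\{H=0\}$. *)

theory Defs
  imports "HOL-Analysis.Analysis"
begin

definition C1 :: "('a::real_normed_vector \<Rightarrow> 'b::real_normed_vector) \<Rightarrow> bool" where
  "C1 f \<longleftrightarrow> (\<exists>f'. (\<forall>x. (f has_derivative blinfun_apply (f' x)) (at x)) \<and> continuous_on UNIV f')"

definition C2 :: "('a::real_normed_vector \<Rightarrow> 'b::real_normed_vector) \<Rightarrow> bool" where
  "C2 f \<longleftrightarrow> (\<exists>f'. (\<forall>x. (f has_derivative blinfun_apply (f' x)) (at x)) \<and> C1 f')"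

definition C1_on_real :: "real set \<Rightarrow> (real \<Rightarrow> real) \<Rightarrow> bool" where
  "C1_on_real S a \<longleftrightarrow> (\<exists>a'. (\<forall>e\<in>S. (a has_real_derivative a' e) (at e within S)) \<and> continuous_on S a')"

definition px :: "(real \<times> real \<Rightarrow> real) \<Rightarrow> real \<Rightarrow> real \<Rightarrow> real" where
  "px f x y = deriv (\<lambda>t. f (t, y)) x"
definition py :: "(real \<times> real \<Rightarrow> real) \<Rightarrow> real \<Rightarrow> real \<Rightarrow> real" where
  "py f x y = deriv (\<lambda>t. f (x, t)) y"

definition Hx :: "(real \<times> real \<times> real \<Rightarrow> real) \<Rightarrow> real \<Rightarrow> real \<Rightarrow> real \<Rightarrow> real" where
  "Hx H x y e = deriv (\<lambda>t. H (t, y, e)) x"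
definition Hy :: "(real \<times> real \<times> real \<Rightarrow> real) \<Rightarrow> real \<Rightarrow> real \<Rightarrow> real \<Rightarrow> real" where
  "Hy H x y e = deriv (\<lambda>t. H (x, t, e)) y"
definition He :: "(real \<times> real \<times> real \<Rightarrow> real) \<Rightarrow> real \<Rightarrow> real \<Rightarrow> real \<Rightarrow> real" where
  "He H x y e = deriv (\<lambda>t. H (x, y, t)) e"

end

(*
  The tangency point (A, B) and the pseudo-equilibrium (a, b, \<lambda>) are the zero sets of two
  C^1 maps F(-, \<epsilon>) depending on the parameter \<epsilon>.  Because H_x(0) = 0 and H_y(0) \<noteq> 0, the
  linearisation of F in the unknowns at the origin is triangular, and its remaining pivot is
  g^-_x(0), respectively the determinant f^-_x(0) g^+(0) - g^-_x(0) f^+(0); so it is invertible.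
  The implicit function theorem, obtained from the inverse function theorem for
  (x, \<epsilon>) \<mapsto> (F(x, \<epsilon>), \<epsilon>), gives unique C^1 branches, and differentiating F(x(\<epsilon>), \<epsilon>) = 0
  at \<epsilon> = 0 yields their derivatives by Cramer's rule.  Off the unique tangency point,
  H_x f^- + H_y g^- cannot vanish on the switching curve, which gives the splitting of the curve
  into sliding and crossing parts.
*)

theory Submission
  imports Defs
begin

section \<open>Implicit functions of a real parameter\<close>

lemma isCont_solution_of_linear_equation:
  fixes L :: "'c::t2_space \<Rightarrow> 'a::euclidean_space \<Rightarrow>\<^sub>L 'b::euclidean_space"
  assumes L: "isCont L e0" and inj: "inj (blinfun_apply (L e0))"
    and sol: "\<forall>\<^sub>F e in at e0. L e (w e) = y" and sol0: "L e0 (w e0) = y"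
  shows "isCont w e0"
proof -
  obtain c where c: "c > 0" "\<And>z. c * norm z \<le> norm (L e0 z)"
    using linear_inj_bounded_below_pos[OF bounded_linear.linear[OF blinfun.bounded_linear_right] inj] by blast
  have dist_L: "((\<lambda>e. norm (L e - L e0)) \<longlongrightarrow> 0) (at e0)"
    using L by (simp add: isCont_def tendsto_norm_zero_iff Lim_null[symmetric])
  have "\<forall>\<^sub>F e in at e0. norm (L e - L e0) < c/2"
    using order_tendstoD(2)[OF dist_L, of "c/2"] c(1) by simp
  with sol have "\<forall>\<^sub>F e in at e0. norm (w e - w e0) \<le> (2/c) * norm (L e - L e0) * norm (w e0)"
  proof eventually_elim
    case (elim e)
    define z where "z = w e - w e0"
    \<comment> \<open>\<open>z\<close> solves a linear equation whose right-hand side is small\<close>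
    have Lz: "L e z = (L e0 - L e) (w e0)"
      using elim(1) sol0 by (simp add: z_def blinfun.diff_right blinfun.diff_left)
    have "c * norm z \<le> norm (L e z) + norm ((L e0 - L e) z)"
      using c(2)[of z] norm_triangle_sub[of "L e0 z" "L e z"] by (simp add: blinfun.diff_left)
    also have "\<dots> \<le> norm (L e - L e0) * norm (w e0) + norm (L e - L e0) * norm z"
      using norm_blinfun[of "L e0 - L e"] by (metis Lz add_mono norm_minus_commute)
    also have "norm (L e - L e0) * norm z \<le> c/2 * norm z"
      using elim(2) by (intro mult_right_mono) auto
    finally show ?case using c(1) by (simp add: z_def field_simps)
  qed
  moreover have "((\<lambda>e. (2/c) * norm (L e - L e0) * norm (w e0)) \<longlongrightarrow> 0) (at e0)"
    using tendsto_mult[OF tendsto_mult[OF tendsto_const dist_L] tendsto_const, of "2/c" "norm (w e0)"] by simp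
  ultimately have "((\<lambda>e. w e - w e0) \<longlongrightarrow> 0) (at e0)"
    by (rule Lim_null_comparison)
  then show ?thesis by (simp add: isCont_def Lim_null[symmetric])
qed

lemma graph_map_local_inverse:
  fixes F :: "'a::euclidean_space \<times> real \<Rightarrow> 'a"
  assumes der: "\<And>p. (F has_derivative D p) (at p)"
    and cont: "\<And>w. continuous_on UNIV (\<lambda>p. D p w)"
    and F0: "F (0, 0) = 0"
    and inj: "\<And>v. D (0, 0) (v, 0) = 0 \<Longrightarrow> v = 0"
  obtains U V g g' where "open U" "(0, 0) \<in> U" "open V" "(0, 0) \<in> V"
    "\<And>p. p \<in> U \<Longrightarrow> g (F p, snd p) = p"
    "\<And>q. q \<in> V \<Longrightarrow> (F (g q), snd (g q)) = q"
    "\<And>q. q \<in> V \<Longrightarrow> (g has_derivative g' q) (at q)"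
    "\<And>q v. q \<in> V \<Longrightarrow> (D (g q) (g' q v), snd (g' q v)) = v"
    "\<And>q. q \<in> V \<Longrightarrow> inj (\<lambda>w. (D (g q) w, snd w))"
proof -
  define G where "G p = (F p, snd p)" for p
  define DG where "DG p = (\<lambda>w. (D p w, snd w))" for p
  have linG: "bounded_linear (DG p)" for p
    unfolding DG_def using der by (intro bounded_linear_Pair bounded_linear_snd has_derivative_bounded_linear)
  define G' where "G' p = Blinfun (DG p)" for p
  have G'_apply: "blinfun_apply (G' p) = DG p" for p
    unfolding G'_def using linG bounded_linear_Blinfun_apply by blast
  have derG: "(G has_derivative G' p) (at p)" for p
    unfolding G_def G'_apply DG_def by (intro has_derivative_Pair der has_derivative_snd has_derivative_ident)
  have contG': "continuous_on UNIV G'"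
    by (rule continuous_on_blinfun_componentwise) (auto simp: G'_apply DG_def intro!: continuous_intros cont)
  have "inj (DG (0, 0))"
  proof (rule linear_inj_iff_eq_0[THEN iffD2, OF bounded_linear.linear[OF linG]], intro allI impI)
    fix x :: "'a \<times> real"
    assume "DG (0, 0) x = 0"
    then show "x = 0"
      using inj[of "fst x"] by (cases x) (simp add: DG_def zero_prod_def)
  qed
  then obtain gi where gi: "linear gi" "gi \<circ> DG (0, 0) = id"
    using linear_injective_left_inverse[OF bounded_linear.linear[OF linG]] by blast
  then have invf: "Blinfun gi o\<^sub>L G' (0, 0) = id_blinfun"
    by (intro blinfun_eqI) (simp add: bounded_linear_Blinfun_apply linear_conv_bounded_linear G'_apply pointfree_idE)
  obtain U V g g' where "open U" "(0, 0) \<in> U" "open V" "G (0, 0) \<in> V"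
      and hom: "homeomorphism U V G g"
      and "\<And>q. q \<in> V \<Longrightarrow> (g has_derivative g' q) (at q)"
      and g': "\<And>q. q \<in> V \<Longrightarrow> g' q = inv (G' (g q))"
      and bij: "\<And>q. q \<in> V \<Longrightarrow> bij (G' (g q))"
    by (rule inverse_function_theorem[OF open_UNIV derG contG' UNIV_I invf]) (rule that; assumption)+
  moreover have "G (0, 0) = (0, 0)"
    by (simp add: G_def F0)
  moreover have "(D (g q) (g' q v), snd (g' q v)) = v" if "q \<in> V" for q v
  proof -
    have "DG (g q) (g' q v) = v"
      using g'[OF that] bij[OF that] by (simp add: G'_apply bij_is_surj surj_f_inv_f)
    then show ?thesis by (simp add: DG_def)
  qed
  moreover have "inj (\<lambda>w. (D (g q) w, snd w))" if "q \<in> V" for q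
    using bij[OF that] by (simp add: G'_apply DG_def bij_is_inj)
  ultimately show thesis
    using hom unfolding homeomorphism_def G_def by (intro that[of U V g g']) auto
qed

lemma has_vector_derivative_fst_slice:
  fixes g :: "'a::real_normed_vector \<times> real \<Rightarrow> 'b::real_normed_vector \<times> real"
  assumes "(g has_derivative g') (at (0, e))" and "g' (0, 1) = (v, 1)"
  shows "((\<lambda>e. fst (g (0, e))) has_vector_derivative v) (at e)"
proof -
  have "((\<lambda>e. g (0, e)) has_derivative (\<lambda>t. g' (0, t))) (at e)"
    using has_derivative_compose[OF has_derivative_Pair[OF has_derivative_const has_derivative_ident] assms(1)]
    by simp
  moreover have "g' (0, t) = t *\<^sub>R (v, 1)" for t
    using linear_scale[OF has_derivative_linear[OF assms(1)], of t "(0, 1)"] assms(2) by simp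
  ultimately show ?thesis
    unfolding has_vector_derivative_def by (auto dest: has_derivative_fst)
qed

lemma implicit_function_branch:
  fixes F :: "'a::euclidean_space \<times> real \<Rightarrow> 'a"
  assumes der: "\<And>p. (F has_derivative D p) (at p)"
    and cont: "\<And>w. continuous_on UNIV (\<lambda>p. D p w)"
    and F0: "F (0, 0) = 0"
    and inj: "\<And>v. D (0, 0) (v, 0) = 0 \<Longrightarrow> v = 0"
  obtains \<rho> \<epsilon> \<phi> \<phi>' where "\<rho> > 0" "\<epsilon> > 0" "\<phi> 0 = 0"
    "\<And>e. \<bar>e\<bar> < \<epsilon> \<Longrightarrow> norm (\<phi> e) < \<rho>/4 \<and> F (\<phi> e, e) = 0"
    "\<And>e x. \<bar>e\<bar> < \<epsilon> \<Longrightarrow> norm x < \<rho> \<Longrightarrow> F (x, e) = 0 \<Longrightarrow> x = \<phi> e"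
    "\<And>e. \<bar>e\<bar> < \<epsilon> \<Longrightarrow> (\<phi> has_vector_derivative \<phi>' e) (at e)"
    "\<And>e. \<bar>e\<bar> < \<epsilon> \<Longrightarrow> D (\<phi> e, e) (\<phi>' e, 1) = 0"
    "\<And>e. \<bar>e\<bar> < \<epsilon> \<Longrightarrow> inj (\<lambda>w. (D (\<phi> e, e) w, snd w))"
proof -
  obtain U V g g' where U: "open U" "(0, 0) \<in> U" and V: "open V" "(0, 0) \<in> V"
    and gG: "\<And>p. p \<in> U \<Longrightarrow> g (F p, snd p) = p"
    and Gg: "\<And>q. q \<in> V \<Longrightarrow> (F (g q), snd (g q)) = q"
    and derg: "\<And>q. q \<in> V \<Longrightarrow> (g has_derivative g' q) (at q)"
    and g': "\<And>q v. q \<in> V \<Longrightarrow> (D (g q) (g' q v), snd (g' q v)) = v"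
    and injD: "\<And>q. q \<in> V \<Longrightarrow> inj (\<lambda>w. (D (g q) w, snd w))"
    using graph_map_local_inverse[OF der cont F0 inj] by blast
  obtain r where r: "r > 0" "ball 0 r \<subseteq> U"
    using U open_contains_ball zero_prod_def by metis
  obtain s where s: "s > 0" "ball 0 s \<subseteq> V"
    using V open_contains_ball zero_prod_def by metis
  define \<rho> where "\<rho> = r/2"
  have g0: "g (0, 0) = (0, 0)"
    using gG[OF U(2)] F0 by simp
  have "isCont g (0, 0)"
    using derg[OF V(2)] has_derivative_continuous by blast
  then obtain s' where s': "s' > 0" "\<And>q. dist q (0, 0) < s' \<Longrightarrow> dist (g q) (0, 0) < \<rho>/4"
    using r(1) g0 unfolding continuous_at_eps_delta \<rho>_def by (metis divide_pos_pos zero_less_numeral)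
  define \<epsilon> where "\<epsilon> = min (min s s') \<rho>"
  define \<phi> where "\<phi> e = fst (g (0, e))" for e
  define \<phi>' where "\<phi>' e = fst (g' (0, e) (0, 1))" for e
  have inV: "(0, e) \<in> V" if "\<bar>e\<bar> < \<epsilon>" for e
    using that s by (auto simp: \<epsilon>_def dist_norm norm_Pair zero_prod_def)
  have g_graph: "g (0, e) = (\<phi> e, e) \<and> F (\<phi> e, e) = 0" if "\<bar>e\<bar> < \<epsilon>" for e
    using Gg[OF inV[OF that]] unfolding \<phi>_def by (metis prod.collapse prod.inject)
  have small: "norm (\<phi> e) < \<rho>/4" if "\<bar>e\<bar> < \<epsilon>" for e
  proof -
    have "norm (g (0, e)) < \<rho>/4"
      using s'(2)[of "(0, e)"] that by (simp add: \<epsilon>_def dist_norm norm_Pair flip: zero_prod_def)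
    then show ?thesis
      using norm_fst_le[of "fst (g (0, e))" "snd (g (0, e))"] unfolding \<phi>_def by simp
  qed
  have unique: "x = \<phi> e" if "\<bar>e\<bar> < \<epsilon>" "norm x < \<rho>" "F (x, e) = 0" for e x
  proof -
    have "norm (x, e) < r"
      using norm_Pair_le[of x e] that unfolding \<epsilon>_def \<rho>_def by simp
    then have "(x, e) \<in> U"
      using r(2) by (auto simp: dist_norm)
    then have "g (0, e) = (x, e)"
      using gG[of "(x, e)"] that(3) by simp
    then show ?thesis using g_graph[OF that(1)] by simp
  qed
  have tangent: "g' (0, e) (0, 1) = (\<phi>' e, 1) \<and> D (\<phi> e, e) (\<phi>' e, 1) = 0" if "\<bar>e\<bar> < \<epsilon>" for e
    using g'[OF inV[OF that], of "(0, 1)"] g_graph[OF that] unfolding \<phi>'_def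
    by (metis prod.collapse prod.inject)
  have der\<phi>: "(\<phi> has_vector_derivative \<phi>' e) (at e)" if "\<bar>e\<bar> < \<epsilon>" for e
    unfolding \<phi>_def using derg[OF inV[OF that]] tangent[OF that] by (blast intro: has_vector_derivative_fst_slice)
  show thesis
  proof (rule that)
    show "\<rho> > 0" "\<epsilon> > 0"
      using r(1) s(1) s'(1) by (simp_all add: \<rho>_def \<epsilon>_def)
    show "\<phi> 0 = 0"
      using g0 by (simp add: \<phi>_def)
    show "inj (\<lambda>w. (D (\<phi> e, e) w, snd w))" if "\<bar>e\<bar> < \<epsilon>" for e
      using injD[OF inV[OF that]] g_graph[OF that] by simp
  qed (use small g_graph unique tangent der\<phi> in blast)+
qed

theorem implicit_function_theorem_real_parameter:
  fixes F :: "'a::euclidean_space \<times> real \<Rightarrow> 'a"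
  assumes der: "\<And>p. (F has_derivative D p) (at p)"
    and cont: "\<And>w. continuous_on UNIV (\<lambda>p. D p w)"
    and F0: "F (0, 0) = 0"
    and inj: "\<And>v. D (0, 0) (v, 0) = 0 \<Longrightarrow> v = 0"
  obtains \<rho> \<epsilon> \<phi> \<phi>' where "\<rho> > 0" "\<epsilon> > 0" "\<phi> 0 = 0"
    "\<And>e. \<bar>e\<bar> < \<epsilon> \<Longrightarrow> norm (\<phi> e) < \<rho>/4 \<and> F (\<phi> e, e) = 0"
    "\<And>e x. \<bar>e\<bar> < \<epsilon> \<Longrightarrow> norm x < \<rho> \<Longrightarrow> F (x, e) = 0 \<Longrightarrow> x = \<phi> e"
    "\<And>e. \<bar>e\<bar> < \<epsilon> \<Longrightarrow> (\<phi> has_vector_derivative \<phi>' e) (at e)"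
    "\<And>e. \<bar>e\<bar> < \<epsilon> \<Longrightarrow> D (\<phi> e, e) (\<phi>' e, 1) = 0"
    "continuous_on {-\<epsilon><..<\<epsilon>} \<phi>'"
proof -
  obtain \<rho> \<epsilon> \<phi> \<phi>' where \<phi>: "\<rho> > 0" "\<epsilon> > 0" "\<phi> 0 = 0"
    "\<And>e. \<bar>e\<bar> < \<epsilon> \<Longrightarrow> norm (\<phi> e) < \<rho>/4 \<and> F (\<phi> e, e) = 0"
    "\<And>e x. \<bar>e\<bar> < \<epsilon> \<Longrightarrow> norm x < \<rho> \<Longrightarrow> F (x, e) = 0 \<Longrightarrow> x = \<phi> e"
    and der\<phi>: "\<And>e. \<bar>e\<bar> < \<epsilon> \<Longrightarrow> (\<phi> has_vector_derivative \<phi>' e) (at e)"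
    and tangent: "\<And>e. \<bar>e\<bar> < \<epsilon> \<Longrightarrow> D (\<phi> e, e) (\<phi>' e, 1) = 0"
    and injD: "\<And>e. \<bar>e\<bar> < \<epsilon> \<Longrightarrow> inj (\<lambda>w. (D (\<phi> e, e) w, snd w))"
    using implicit_function_branch[OF der cont F0 inj] by blast
  define I where "I = {-\<epsilon><..<\<epsilon>}"
  \<comment> \<open>\<open>(\<phi>' e, 1)\<close> is the unique solution of a linear system depending continuously on \<open>e\<close>\<close>
  define L where "L e = Blinfun (\<lambda>w. (D (\<phi> e, e) w, snd w))" for e
  have L_apply: "blinfun_apply (L e) = (\<lambda>w. (D (\<phi> e, e) w, snd w))" for e
    unfolding L_def using der
    by (intro bounded_linear_Blinfun_apply bounded_linear_Pair bounded_linear_snd has_derivative_bounded_linear)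
  have "continuous_on I \<phi>"
    by (auto simp: I_def intro!: continuous_at_imp_continuous_on has_vector_derivative_continuous[OF der\<phi>])
  then have "continuous_on I L"
    by (intro continuous_on_blinfun_componentwise)
       (auto simp: L_apply intro!: continuous_intros continuous_on_compose2[OF cont])
  moreover have L_solution: "L e (\<phi>' e, 1) = (0, 1)" if "e \<in> I" for e
    using tangent that by (simp add: I_def L_apply abs_less_iff)
  ultimately have "isCont \<phi>' e" if "e \<in> I" for e
  proof -
    have "\<forall>\<^sub>F e' in at e. e' \<in> I"
      using that by (intro eventually_at_in_open') (auto simp: I_def)
    then have "\<forall>\<^sub>F e' in at e. L e' (\<phi>' e', 1) = (0, 1)"
      by eventually_elim fact
    moreover have "isCont L e"
      using \<open>continuous_on I L\<close> that by (simp add: I_def continuous_on_eq_continuous_at)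
    ultimately have "isCont (\<lambda>e. (\<phi>' e, 1::real)) e"
      using that injD L_solution by (intro isCont_solution_of_linear_equation[where y = "(0, 1)"])
        (auto simp: I_def L_apply abs_less_iff)
    from isCont_fst[OF this] show ?thesis by simp
  qed
  then have "continuous_on I \<phi>'"
    by (intro continuous_at_imp_continuous_on) blast
  then show thesis
    using that[OF \<phi> der\<phi> tangent] unfolding I_def by blast
qed

section \<open>Partial derivatives and smoothness\<close>

lemma deriv_along_line:
  assumes "(f has_derivative D) (at (a + t *\<^sub>R v))"
  shows "deriv (\<lambda>s. f (a + s *\<^sub>R v)) t = D v"
proof -
  have "((\<lambda>s. a + s *\<^sub>R v) has_derivative (\<lambda>s. s *\<^sub>R v)) (at t)"
    by (auto intro!: derivative_eq_intros)
  from has_derivative_compose[OF this assms]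
  have "((\<lambda>s. f (a + s *\<^sub>R v)) has_derivative (\<lambda>s. D (s *\<^sub>R v))) (at t)" .
  then have "((\<lambda>s. f (a + s *\<^sub>R v)) has_real_derivative D v) (at t)"
    unfolding has_field_derivative_def
    by (rule has_derivative_eq_rhs) (simp add: fun_eq_iff linear_scale[OF has_derivative_linear[OF assms]])
  then show ?thesis
    by (rule DERIV_imp_deriv)
qed

lemma has_derivative_eq_partials3:
  assumes "(H has_derivative D) (at (x, y, e))"
  shows "D (u, v, t) = u * Hx H x y e + v * Hy H x y e + t * He H x y e"
proof -
  have lin: "linear D"
    using assms by (rule has_derivative_linear)
  have "D (u, v, t) = D (u *\<^sub>R (1, 0, 0) + v *\<^sub>R (0, 1, 0) + t *\<^sub>R (0, 0, 1))"
    by simp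
  also have "\<dots> = u *\<^sub>R D (1, 0, 0) + v *\<^sub>R D (0, 1, 0) + t *\<^sub>R D (0, 0, 1)"
    by (simp only: linear_add[OF lin] linear_scale[OF lin])
  also have "D (1, 0, 0) = Hx H x y e"
    using deriv_along_line[of H D "(0, y, e)" x "(1, 0, 0)"] assms by (simp add: Hx_def)
  also have "D (0, 1, 0) = Hy H x y e"
    using deriv_along_line[of H D "(x, 0, e)" y "(0, 1, 0)"] assms by (simp add: Hy_def)
  also have "D (0, 0, 1) = He H x y e"
    using deriv_along_line[of H D "(x, y, 0)" e "(0, 0, 1)"] assms by (simp add: He_def)
  finally show ?thesis by simp
qed

lemma has_derivative_eq_partials2:
  assumes "(f has_derivative D) (at (x, y))"
  shows "D (u, v) = u * px f x y + v * py f x y"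
proof -
  have lin: "linear D"
    using assms by (rule has_derivative_linear)
  have "D (u, v) = D (u *\<^sub>R (1, 0) + v *\<^sub>R (0, 1))"
    by simp
  also have "\<dots> = u *\<^sub>R D (1, 0) + v *\<^sub>R D (0, 1)"
    by (simp only: linear_add[OF lin] linear_scale[OF lin])
  also have "D (1, 0) = px f x y"
    using deriv_along_line[of f D "(0, y)" x "(1, 0)"] assms by (simp add: px_def)
  also have "D (0, 1) = py f x y"
    using deriv_along_line[of f D "(x, 0)" y "(0, 1)"] assms by (simp add: py_def)
  finally show ?thesis by simp
qed

lemma C2_imp_C1: "C2 f \<Longrightarrow> C1 f"
  unfolding C2_def C1_def
  by (meson continuous_at_imp_continuous_on has_derivative_continuous)

lemma C2_imp_second_derivative:
  assumes "C2 f"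
  obtains Df D2f where "\<And>x. (f has_derivative blinfun_apply (Df x)) (at x)"
    "\<And>x. (Df has_derivative blinfun_apply (D2f x)) (at x)" "continuous_on UNIV D2f"
  using assms unfolding C2_def C1_def by blast

lemma has_real_derivative_bounded_linear_image:
  fixes \<pi> :: "'a::real_normed_vector \<Rightarrow> real"
  assumes "(\<phi> has_vector_derivative v) (at e)" "bounded_linear \<pi>"
  shows "((\<lambda>e. \<pi> (\<phi> e)) has_real_derivative \<pi> v) (at e)"
  using bounded_linear.has_derivative[OF assms(2) assms(1)[unfolded has_vector_derivative_def]]
  by (simp add: has_real_derivative_iff_has_vector_derivative has_vector_derivative_def
      linear_scale[OF bounded_linear.linear[OF assms(2)]])

lemma C1_on_real_bounded_linear_image:
  fixes \<pi> :: "'a::real_normed_vector \<Rightarrow> real"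
  assumes "\<And>e. e \<in> S \<Longrightarrow> (\<phi> has_vector_derivative \<phi>' e) (at e)" "continuous_on S \<phi>'"
    and "bounded_linear \<pi>"
  shows "C1_on_real S (\<lambda>e. \<pi> (\<phi> e))"
  unfolding C1_on_real_def
proof (intro exI conjI ballI)
  show "((\<lambda>e. \<pi> (\<phi> e)) has_real_derivative \<pi> (\<phi>' e)) (at e within S)" if "e \<in> S" for e
    using has_real_derivative_bounded_linear_image[OF assms(1)[OF that] assms(3)]
    by (rule has_field_derivative_at_within)
  show "continuous_on S (\<lambda>e. \<pi> (\<phi>' e))"
    using assms(2) by (intro continuous_on_compose2[OF linear_continuous_on[OF assms(3)]]) auto
qed

lemma C1_on_real_subset: "C1_on_real S a \<Longrightarrow> T \<subseteq> S \<Longrightarrow> C1_on_real T a"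
  unfolding C1_on_real_def by (meson continuous_on_subset has_field_derivative_subset subsetD)

section \<open>The tangency point of the sliding vector field\<close>

definition tangency_system ::
  "(real \<times> real \<times> real \<Rightarrow> real) \<Rightarrow> (real \<times> real \<Rightarrow> real) \<Rightarrow> (real \<times> real \<Rightarrow> real) \<Rightarrow>
    (real \<times> real) \<times> real \<Rightarrow> real \<times> real" where
  "tangency_system H f g =
    (\<lambda>((x, y), e). (H (x, y, e), Hx H x y e * f (x, y) + Hy H x y e * g (x, y)))"

lemma tangency_system_continuously_differentiable:
  assumes "C1 f" "C1 g" "C2 H" and f0: "f (0, 0) = 0" and g0: "g (0, 0) = 0"
  obtains D where "\<And>p. (tangency_system H f g has_derivative D p) (at p)"
    "\<And>w. continuous_on UNIV (\<lambda>p. D p w)"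
    "\<And>u v t. D ((0, 0), 0) ((u, v), t) =
      (u * Hx H 0 0 0 + v * Hy H 0 0 0 + t * He H 0 0 0,
       Hx H 0 0 0 * (u * px f 0 0 + v * py f 0 0) + Hy H 0 0 0 * (u * px g 0 0 + v * py g 0 0))"
proof -
  obtain Df where df: "\<And>x. (f has_derivative blinfun_apply (Df x)) (at x)" and cDf: "continuous_on UNIV Df"
    using \<open>C1 f\<close> unfolding C1_def by blast
  obtain Dg where dg: "\<And>x. (g has_derivative blinfun_apply (Dg x)) (at x)" and cDg: "continuous_on UNIV Dg"
    using \<open>C1 g\<close> unfolding C1_def by blast
  obtain DH D2H where dH: "\<And>q. (H has_derivative blinfun_apply (DH q)) (at q)"
      and dDH: "\<And>q. (DH has_derivative blinfun_apply (D2H q)) (at q)" and cD2H: "continuous_on UNIV D2H"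
    using C2_imp_second_derivative[OF \<open>C2 H\<close>] by blast
  have cDH: "continuous_on UNIV DH"
    using dDH by (meson continuous_at_imp_continuous_on has_derivative_continuous)
  have cf: "continuous_on UNIV f" and cg: "continuous_on UNIV g"
    using df dg by (meson continuous_at_imp_continuous_on has_derivative_continuous)+
  define T where "T p = (fst (fst p), snd (fst p), snd p)" for p :: "(real \<times> real) \<times> real"
  have system: "tangency_system H f g =
      (\<lambda>p. (H (T p), DH (T p) (1, 0, 0) * f (fst p) + DH (T p) (0, 1, 0) * g (fst p)))"
    using has_derivative_eq_partials3[OF dH]
    by (auto simp: tangency_system_def T_def fun_eq_iff)
  define D where "D p w =
      (DH (T p) (T w),
       DH (T p) (1, 0, 0) * Df (fst p) (fst w) + D2H (T p) (T w) (1, 0, 0) * f (fst p) +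
       (DH (T p) (0, 1, 0) * Dg (fst p) (fst w) + D2H (T p) (T w) (0, 1, 0) * g (fst p)))" for p w
  have dT: "(T has_derivative T) (at p)" for p
    unfolding T_def by (auto intro!: derivative_eq_intros)
  have "(tangency_system H f g has_derivative D p) (at p)" for p
    unfolding system D_def
    by (intro has_derivative_Pair has_derivative_add has_derivative_mult
        has_derivative_compose[OF dT dH] has_derivative_compose[OF has_derivative_fst[OF has_derivative_ident] df]
        has_derivative_compose[OF has_derivative_fst[OF has_derivative_ident] dg]
        bounded_linear.has_derivative[OF blinfun.bounded_linear_left has_derivative_compose[OF dT dDH]])
  moreover have "continuous_on UNIV (\<lambda>p. D p w)" for w
    unfolding D_def T_def
    by (intro continuous_intros continuous_on_compose2[OF cDH] continuous_on_compose2[OF cD2H]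
        continuous_on_compose2[OF cDf] continuous_on_compose2[OF cDg]
        continuous_on_compose2[OF cf] continuous_on_compose2[OF cg]) auto
  moreover have "D ((0, 0), 0) ((u, v), t) =
      (u * Hx H 0 0 0 + v * Hy H 0 0 0 + t * He H 0 0 0,
       Hx H 0 0 0 * (u * px f 0 0 + v * py f 0 0) + Hy H 0 0 0 * (u * px g 0 0 + v * py g 0 0))" for u v t
    using has_derivative_eq_partials3[OF dH] has_derivative_eq_partials2[OF df]
      has_derivative_eq_partials2[OF dg]
    by (simp add: D_def T_def f0 g0)
  ultimately show thesis
    using that by blast
qed

lemma tangency_linearization_solution:
  fixes hx hy he fx fy gx gy :: real
  assumes "hx = 0" "hy \<noteq> 0" "gx \<noteq> 0"
  shows "(u * hx + v * hy + t * he = 0 \<and> hx * (u * fx + v * fy) + hy * (u * gx + v * gy) = 0) \<longleftrightarrow>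
    (u = t * (he / hy * (gy / gx)) \<and> v = t * (he / hy * (-1)))"
proof -
  have "(u * hx + v * hy + t * he = 0 \<and> hx * (u * fx + v * fy) + hy * (u * gx + v * gy) = 0) \<longleftrightarrow>
      (v * hy = - (t * he) \<and> u * gx + v * gy = 0)"
    using assms(1,2) by (simp add: eq_neg_iff_add_eq_0)
  also have "\<dots> \<longleftrightarrow> (v = t * (he / hy * (-1)) \<and> u * gx = - (v * gy))"
    using assms(2) by (auto simp: field_simps)
  also have "\<dots> \<longleftrightarrow> (v = t * (he / hy * (-1)) \<and> u = - (v * gy) / gx)"
    using assms(3) by (auto simp: eq_divide_eq mult_ac)
  also have "\<dots> \<longleftrightarrow> (u = t * (he / hy * (gy / gx)) \<and> v = t * (he / hy * (-1)))"
    by (auto simp: field_simps)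
  finally show ?thesis .
qed

lemma tangency_point_branch:
  fixes f g :: "real \<times> real \<Rightarrow> real" and H :: "real \<times> real \<times> real \<Rightarrow> real"
  assumes "C1 f" "C1 g" "C2 H"
    and f0: "f (0, 0) = 0" and g0: "g (0, 0) = 0" and H0: "H (0, 0, 0) = 0"
    and Hx0: "Hx H 0 0 0 = 0" and Hy0: "Hy H 0 0 0 \<noteq> 0" and gx0: "px g 0 0 \<noteq> 0"
  obtains r \<epsilon> A B where "r > 0" "\<epsilon> > 0" "A 0 = 0" "B 0 = 0"
    "C1_on_real {-\<epsilon><..<\<epsilon>} A" "C1_on_real {-\<epsilon><..<\<epsilon>} B"
    "\<And>e. \<bar>e\<bar> < \<epsilon> \<Longrightarrow> A e \<in> {-r..r} \<and> B e \<in> {-r..r}"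
    "\<And>e x y. \<bar>e\<bar> < \<epsilon> \<Longrightarrow> x \<in> {-r..r} \<Longrightarrow> y \<in> {-r..r} \<Longrightarrow>
      (H (x, y, e) = 0 \<and> Hx H x y e * f (x, y) + Hy H x y e * g (x, y) = 0) \<longleftrightarrow> (x = A e \<and> y = B e)"
    "(A has_real_derivative (He H 0 0 0 / Hy H 0 0 0) * (py g 0 0 / px g 0 0)) (at 0)"
    "(B has_real_derivative (He H 0 0 0 / Hy H 0 0 0) * (-1)) (at 0)"
proof -
  obtain D where der: "\<And>p. (tangency_system H f g has_derivative D p) (at p)"
    and cont: "\<And>w. continuous_on UNIV (\<lambda>p. D p w)"
    and D0: "\<And>u v t. D ((0, 0), 0) ((u, v), t) =
      (u * Hx H 0 0 0 + v * Hy H 0 0 0 + t * He H 0 0 0,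
       Hx H 0 0 0 * (u * px f 0 0 + v * py f 0 0) + Hy H 0 0 0 * (u * px g 0 0 + v * py g 0 0))"
    using tangency_system_continuously_differentiable[OF assms(1-5)] by blast
  have D0_zero_iff: "D ((0, 0), 0) ((u, v), t) = 0 \<longleftrightarrow>
      u = t * (He H 0 0 0 / Hy H 0 0 0 * (py g 0 0 / px g 0 0)) \<and> v = t * (He H 0 0 0 / Hy H 0 0 0 * (-1))"
    for u v t
    unfolding D0 zero_prod_def prod.inject using tangency_linearization_solution[OF Hx0 Hy0 gx0] by blast
  have "tangency_system H f g (0, 0) = 0"
    by (simp add: tangency_system_def zero_prod_def f0 g0 H0)
  moreover have "v = 0" if "D (0, 0) (v, 0) = 0" for v
    using that D0_zero_iff[of "fst v" "snd v" 0] by (simp add: zero_prod_def prod_eq_iff)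
  ultimately obtain \<rho> \<epsilon> \<phi> \<phi>' where "\<rho> > 0" "\<epsilon> > 0" "\<phi> 0 = 0"
    and sol: "\<And>e. \<bar>e\<bar> < \<epsilon> \<Longrightarrow> norm (\<phi> e) < \<rho>/4 \<and> tangency_system H f g (\<phi> e, e) = 0"
    and unique: "\<And>e x. \<bar>e\<bar> < \<epsilon> \<Longrightarrow> norm x < \<rho> \<Longrightarrow> tangency_system H f g (x, e) = 0 \<Longrightarrow> x = \<phi> e"
    and der\<phi>: "\<And>e. \<bar>e\<bar> < \<epsilon> \<Longrightarrow> (\<phi> has_vector_derivative \<phi>' e) (at e)"
    and tangent: "\<And>e. \<bar>e\<bar> < \<epsilon> \<Longrightarrow> D (\<phi> e, e) (\<phi>' e, 1) = 0"
    and "continuous_on {-\<epsilon><..<\<epsilon>} \<phi>'"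
    using implicit_function_theorem_real_parameter[OF der cont] by blast
  define r where "r = \<rho>/3"
  have system_zero_iff: "tangency_system H f g ((x, y), e) = 0 \<longleftrightarrow>
      H (x, y, e) = 0 \<and> Hx H x y e * f (x, y) + Hy H x y e * g (x, y) = 0" for x y e
    by (simp add: tangency_system_def zero_prod_def)
  have box: "fst (\<phi> e) \<in> {-r..r} \<and> snd (\<phi> e) \<in> {-r..r}" if "\<bar>e\<bar> < \<epsilon>" for e
    using sol[OF that] norm_fst_le[of "fst (\<phi> e)" "snd (\<phi> e)"] norm_snd_le[of "snd (\<phi> e)" "fst (\<phi> e)"]
    by (auto simp: r_def)
  have "(H (x, y, e) = 0 \<and> Hx H x y e * f (x, y) + Hy H x y e * g (x, y) = 0) \<longleftrightarrow>
      (x = fst (\<phi> e) \<and> y = snd (\<phi> e))"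
    if "\<bar>e\<bar> < \<epsilon>" "x \<in> {-r..r}" "y \<in> {-r..r}" for x y e
  proof -
    have "norm (x, y) < \<rho>"
      using norm_Pair_le[of x y] that(2,3) \<open>\<rho> > 0\<close> by (auto simp: r_def)
    then show ?thesis
      using unique[OF that(1)] sol[OF that(1)] system_zero_iff[of "fst (\<phi> e)" "snd (\<phi> e)" e]
      by (auto simp: system_zero_iff simp flip: prod_eq_iff)
  qed
  moreover have "\<phi>' 0 = (He H 0 0 0 / Hy H 0 0 0 * (py g 0 0 / px g 0 0), He H 0 0 0 / Hy H 0 0 0 * (-1))"
    using tangent[of 0] \<open>\<epsilon> > 0\<close> \<open>\<phi> 0 = 0\<close> D0_zero_iff[of "fst (\<phi>' 0)" "snd (\<phi>' 0)" 1]
    by (simp add: zero_prod_def prod_eq_iff)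
  moreover have "C1_on_real {-\<epsilon><..<\<epsilon>} (\<lambda>e. fst (\<phi> e))" "C1_on_real {-\<epsilon><..<\<epsilon>} (\<lambda>e. snd (\<phi> e))"
    using der\<phi> \<open>continuous_on {-\<epsilon><..<\<epsilon>} \<phi>'\<close>
    by (intro C1_on_real_bounded_linear_image bounded_linear_fst bounded_linear_snd; simp add: abs_less_iff)+
  moreover have "((\<lambda>e. fst (\<phi> e)) has_real_derivative fst (\<phi>' 0)) (at 0)"
    "((\<lambda>e. snd (\<phi> e)) has_real_derivative snd (\<phi>' 0)) (at 0)"
    using der\<phi>[of 0] \<open>\<epsilon> > 0\<close>
    by (intro has_real_derivative_bounded_linear_image bounded_linear_fst bounded_linear_snd; simp)+
  ultimately show thesis
    using that[of r \<epsilon> "\<lambda>e. fst (\<phi> e)" "\<lambda>e. snd (\<phi> e)"] \<open>\<rho> > 0\<close> \<open>\<epsilon> > 0\<close> \<open>\<phi> 0 = 0\<close> box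
    by (simp add: r_def)
qed

lemma zero_set_diff_common_zero:
  fixes k :: "'a \<Rightarrow> real"
  assumes "\<And>p. p \<in> S \<Longrightarrow> (h p = 0 \<and> k p = 0) \<longleftrightarrow> p = q"
  shows "{p \<in> S. h p = 0} - {q} = {p \<in> S. h p = 0 \<and> k p > 0} \<union> {p \<in> S. h p = 0 \<and> k p < 0}"
  using assms by (fastforce simp: linorder_neq_iff)

lemma tangency_point_sliding_crossing:
  fixes f g :: "real \<times> real \<Rightarrow> real" and H :: "real \<times> real \<times> real \<Rightarrow> real"
  assumes "C1 f" "C1 g" "C2 H"
    and "f (0, 0) = 0" "g (0, 0) = 0" "H (0, 0, 0) = 0"
    and "Hx H 0 0 0 = 0" "Hy H 0 0 0 \<noteq> 0" "px g 0 0 \<noteq> 0"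
  shows "\<exists>r>0. \<exists>\<epsilon>0>0. \<exists>A B.
     C1_on_real {0..\<epsilon>0} A \<and> C1_on_real {0..\<epsilon>0} B \<and> A 0 = 0 \<and> B 0 = 0 \<and>
     (\<forall>e\<in>{0<..\<epsilon>0}. A e \<in> {-r..r} \<and> B e \<in> {-r..r} \<and>
        (\<forall>x\<in>{-r..r}. \<forall>y\<in>{-r..r}.
           (H (x, y, e) = 0 \<and> Hx H x y e * f (x, y) + Hy H x y e * g (x, y) = 0)
           \<longleftrightarrow> (x = A e \<and> y = B e))) \<and>
     (A has_real_derivative (He H 0 0 0 / Hy H 0 0 0) * (py g 0 0 / px g 0 0)) (at 0 within {0..\<epsilon>0}) \<and>
     (B has_real_derivative (He H 0 0 0 / Hy H 0 0 0) * (-1)) (at 0 within {0..\<epsilon>0}) \<and>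
     (\<forall>e\<in>{0<..\<epsilon>0}.
        {p \<in> {-r..r} \<times> {-r..r}. H (fst p, snd p, e) = 0} - {(A e, B e)} =
        {p \<in> {-r..r} \<times> {-r..r}. H (fst p, snd p, e) = 0 \<and>
            Hx H (fst p) (snd p) e * f p + Hy H (fst p) (snd p) e * g p > 0}
        \<union> {p \<in> {-r..r} \<times> {-r..r}. H (fst p, snd p, e) = 0 \<and>
            Hx H (fst p) (snd p) e * f p + Hy H (fst p) (snd p) e * g p < 0})"
proof -
  obtain r \<epsilon> A B where "r > 0" "\<epsilon> > 0" "A 0 = 0" "B 0 = 0"
    and C1_AB: "C1_on_real {-\<epsilon><..<\<epsilon>} A" "C1_on_real {-\<epsilon><..<\<epsilon>} B"
    and box: "\<And>e. \<bar>e\<bar> < \<epsilon> \<Longrightarrow> A e \<in> {-r..r} \<and> B e \<in> {-r..r}"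
    and unique: "\<And>e x y. \<bar>e\<bar> < \<epsilon> \<Longrightarrow> x \<in> {-r..r} \<Longrightarrow> y \<in> {-r..r} \<Longrightarrow>
      (H (x, y, e) = 0 \<and> Hx H x y e * f (x, y) + Hy H x y e * g (x, y) = 0) \<longleftrightarrow> (x = A e \<and> y = B e)"
    and der_AB: "(A has_real_derivative (He H 0 0 0 / Hy H 0 0 0) * (py g 0 0 / px g 0 0)) (at 0)"
      "(B has_real_derivative (He H 0 0 0 / Hy H 0 0 0) * (-1)) (at 0)"
    using tangency_point_branch[OF assms] by blast
  define \<epsilon>0 where "\<epsilon>0 = \<epsilon>/2"
  have sub: "{0..\<epsilon>0} \<subseteq> {-\<epsilon><..<\<epsilon>}"
    using \<open>\<epsilon> > 0\<close> by (auto simp: \<epsilon>0_def)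
  have near_zero: "\<bar>e\<bar> < \<epsilon>" if "e \<in> {0<..\<epsilon>0}" for e
    using that sub by (auto simp: subset_iff)
  have "\<epsilon>0 > 0"
    using \<open>\<epsilon> > 0\<close> by (simp add: \<epsilon>0_def)
  show ?thesis
  proof (rule exI[of _ r], rule conjI[OF \<open>r > 0\<close>], rule exI[of _ \<epsilon>0], rule conjI[OF \<open>\<epsilon>0 > 0\<close>],
      rule exI[of _ A], rule exI[of _ B], intro conjI ballI)
    show "C1_on_real {0..\<epsilon>0} A" "C1_on_real {0..\<epsilon>0} B"
      using C1_AB by (auto intro: C1_on_real_subset[OF _ sub])
    show "(A has_real_derivative (He H 0 0 0 / Hy H 0 0 0) * (py g 0 0 / px g 0 0)) (at 0 within {0..\<epsilon>0})"
      "(B has_real_derivative (He H 0 0 0 / Hy H 0 0 0) * (-1)) (at 0 within {0..\<epsilon>0})"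
      using der_AB by (auto intro: has_field_derivative_at_within)
    show "{p \<in> {-r..r} \<times> {-r..r}. H (fst p, snd p, e) = 0} - {(A e, B e)} =
        {p \<in> {-r..r} \<times> {-r..r}. H (fst p, snd p, e) = 0 \<and>
            Hx H (fst p) (snd p) e * f p + Hy H (fst p) (snd p) e * g p > 0}
        \<union> {p \<in> {-r..r} \<times> {-r..r}. H (fst p, snd p, e) = 0 \<and>
            Hx H (fst p) (snd p) e * f p + Hy H (fst p) (snd p) e * g p < 0}" if "e \<in> {0<..\<epsilon>0}" for e
      using unique[OF near_zero[OF that]] by (intro zero_set_diff_common_zero) (clarsimp simp del: atLeastAtMost_iff)
  qed (use \<open>A 0 = 0\<close> \<open>B 0 = 0\<close> box unique near_zero in auto)
qed

section \<open>Pseudo-equilibria\<close>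

definition pseudo_equilibrium_system ::
  "(real \<times> real \<Rightarrow> real) \<Rightarrow> (real \<times> real \<Rightarrow> real) \<Rightarrow> (real \<times> real \<Rightarrow> real) \<Rightarrow> (real \<times> real \<Rightarrow> real) \<Rightarrow>
    (real \<times> real \<times> real \<Rightarrow> real) \<Rightarrow> (real \<times> real \<times> real) \<times> real \<Rightarrow> real \<times> real \<times> real" where
  "pseudo_equilibrium_system fp gp fm gm H =
    (\<lambda>((x, y, \<mu>), e). (fm (x, y) - \<mu> * fp (x, y), gm (x, y) - \<mu> * gp (x, y), H (x, y, e)))"

lemma pseudo_equilibrium_system_continuously_differentiable:
  assumes "C1 fp" "C1 gp" "C1 fm" "C1 gm" "C1 H"
  obtains D where "\<And>p. (pseudo_equilibrium_system fp gp fm gm H has_derivative D p) (at p)"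
    "\<And>w. continuous_on UNIV (\<lambda>p. D p w)"
    "\<And>u v m t. D ((0, 0, 0), 0) ((u, v, m), t) =
      (u * px fm 0 0 + v * py fm 0 0 - m * fp (0, 0), u * px gm 0 0 + v * py gm 0 0 - m * gp (0, 0),
       u * Hx H 0 0 0 + v * Hy H 0 0 0 + t * He H 0 0 0)"
proof -
  obtain Dfp where dfp: "\<And>x. (fp has_derivative blinfun_apply (Dfp x)) (at x)" and cDfp: "continuous_on UNIV Dfp"
    using \<open>C1 fp\<close> unfolding C1_def by blast
  obtain Dgp where dgp: "\<And>x. (gp has_derivative blinfun_apply (Dgp x)) (at x)" and cDgp: "continuous_on UNIV Dgp"
    using \<open>C1 gp\<close> unfolding C1_def by blast
  obtain Dfm where dfm: "\<And>x. (fm has_derivative blinfun_apply (Dfm x)) (at x)" and cDfm: "continuous_on UNIV Dfm"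
    using \<open>C1 fm\<close> unfolding C1_def by blast
  obtain Dgm where dgm: "\<And>x. (gm has_derivative blinfun_apply (Dgm x)) (at x)" and cDgm: "continuous_on UNIV Dgm"
    using \<open>C1 gm\<close> unfolding C1_def by blast
  obtain DH where dH: "\<And>q. (H has_derivative blinfun_apply (DH q)) (at q)" and cDH: "continuous_on UNIV DH"
    using \<open>C1 H\<close> unfolding C1_def by blast
  have cfp: "continuous_on UNIV fp" and cgp: "continuous_on UNIV gp"
    using dfp dgp by (meson continuous_at_imp_continuous_on has_derivative_continuous)+
  define xy where "xy p = (fst (fst p), fst (snd (fst p)))" for p :: "(real \<times> real \<times> real) \<times> real"
  define \<mu> where "\<mu> p = snd (snd (fst p))" for p :: "(real \<times> real \<times> real) \<times> real"
  define T where "T p = (fst (fst p), fst (snd (fst p)), snd p)" for p :: "(real \<times> real \<times> real) \<times> real"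
  have system: "pseudo_equilibrium_system fp gp fm gm H =
      (\<lambda>p. (fm (xy p) - \<mu> p * fp (xy p), gm (xy p) - \<mu> p * gp (xy p), H (T p)))"
    by (auto simp: pseudo_equilibrium_system_def xy_def \<mu>_def T_def fun_eq_iff)
  define D where "D p w =
      (Dfm (xy p) (xy w) - (\<mu> p * Dfp (xy p) (xy w) + \<mu> w * fp (xy p)),
       Dgm (xy p) (xy w) - (\<mu> p * Dgp (xy p) (xy w) + \<mu> w * gp (xy p)),
       DH (T p) (T w))" for p w
  have dxy: "(xy has_derivative xy) (at p)" and d\<mu>: "(\<mu> has_derivative \<mu>) (at p)"
    and dT: "(T has_derivative T) (at p)" for p
    unfolding xy_def \<mu>_def T_def by (auto intro!: derivative_eq_intros)
  have "(pseudo_equilibrium_system fp gp fm gm H has_derivative D p) (at p)" for p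
    unfolding system D_def
    by (intro has_derivative_Pair has_derivative_diff has_derivative_mult d\<mu>
        has_derivative_compose[OF dxy dfm] has_derivative_compose[OF dxy dgm]
        has_derivative_compose[OF dxy dfp] has_derivative_compose[OF dxy dgp] has_derivative_compose[OF dT dH])
  moreover have "continuous_on UNIV (\<lambda>p. D p w)" for w
    unfolding D_def xy_def \<mu>_def T_def
    by (intro continuous_intros continuous_on_compose2[OF cDH] continuous_on_compose2[OF cDfm]
        continuous_on_compose2[OF cDgm] continuous_on_compose2[OF cDfp] continuous_on_compose2[OF cDgp]
        continuous_on_compose2[OF cfp] continuous_on_compose2[OF cgp]) auto
  moreover have "D ((0, 0, 0), 0) ((u, v, m), t) =
      (u * px fm 0 0 + v * py fm 0 0 - m * fp (0, 0), u * px gm 0 0 + v * py gm 0 0 - m * gp (0, 0),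
       u * Hx H 0 0 0 + v * Hy H 0 0 0 + t * He H 0 0 0)" for u v m t
    using has_derivative_eq_partials3[OF dH] has_derivative_eq_partials2[OF dfm]
      has_derivative_eq_partials2[OF dgm]
    by (simp add: D_def xy_def \<mu>_def T_def)
  ultimately show thesis
    using that by blast
qed

lemma pseudo_equilibrium_linearization_solution:
  fixes fx fy gx gy hx hy he fp gp :: real
  assumes hx: "hx = 0" and hy: "hy \<noteq> 0" and det: "fx * gp - gx * fp \<noteq> 0"
  shows "(u * fx + v * fy - m * fp = 0 \<and> u * gx + v * gy - m * gp = 0 \<and> u * hx + v * hy + t * he = 0) \<longleftrightarrow>
    (u = t * (he / hy * ((fy * gp - gy * fp) / (fx * gp - gx * fp))) \<and> v = t * (he / hy * (-1)) \<and>
     m = t * (he / hy * (- ((fx * gy - fy * gx) / (fx * gp - gx * fp)))))"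
    (is "?eqs \<longleftrightarrow> ?sol")
proof
  assume ?eqs
  then have 1: "u * fx + v * fy - m * fp = 0" and 2: "u * gx + v * gy - m * gp = 0"
    and v: "v = t * (he / hy * (-1))"
    using hx hy by (auto simp: field_simps)
  \<comment> \<open>Cramer's rule for the remaining \<open>2 \<times> 2\<close> system in \<open>u\<close> and \<open>m\<close>\<close>
  have "u * (fx * gp - gx * fp) = gp * (u * fx + v * fy - m * fp) - fp * (u * gx + v * gy - m * gp)
      - v * (fy * gp - gy * fp)"
    by (simp add: algebra_simps)
  then have u: "u = - v * (fy * gp - gy * fp) / (fx * gp - gx * fp)"
    unfolding 1 2 by (intro eq_divide_imp[OF det]) simp
  have "m * (fx * gp - gx * fp) = gx * (u * fx + v * fy - m * fp) - fx * (u * gx + v * gy - m * gp)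
      + v * (fx * gy - fy * gx)"
    by (simp add: algebra_simps)
  then have m: "m = v * (fx * gy - fy * gx) / (fx * gp - gx * fp)"
    unfolding 1 2 by (intro eq_divide_imp[OF det]) simp
  show ?sol
    using u m v by simp
next
  assume ?sol
  then obtain c where u: "u = c * (fy * gp - gy * fp)" and v: "v = - c * (fx * gp - gx * fp)"
      and m: "m = - c * (fx * gy - fy * gx)" and c: "c * (fx * gp - gx * fp) = t * (he / hy)"
    using det by (intro that[of "t * (he / hy) / (fx * gp - gx * fp)"]) auto
  have "u * fx + v * fy - m * fp = 0" "u * gx + v * gy - m * gp = 0"
    unfolding u v m by (simp_all add: algebra_simps)
  moreover have "u * hx + v * hy + t * he = 0"
    unfolding v using c hx hy by (simp add: field_simps)
  ultimately show ?eqs by blast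
qed

lemma pseudo_equilibrium_branch:
  fixes fp gp fm gm :: "real \<times> real \<Rightarrow> real" and H :: "real \<times> real \<times> real \<Rightarrow> real"
  assumes "C1 fp" "C1 gp" "C1 fm" "C1 gm" "C1 H"
    and fm0: "fm (0, 0) = 0" and gm0: "gm (0, 0) = 0" and H0: "H (0, 0, 0) = 0"
    and Hx0: "Hx H 0 0 0 = 0" and Hy0: "Hy H 0 0 0 \<noteq> 0"
    and det: "px fm 0 0 * gp (0, 0) - px gm 0 0 * fp (0, 0) \<noteq> 0"
  shows "\<exists>\<delta>>0. \<exists>\<epsilon>1>0. \<exists>a b l.
    C1_on_real {-\<epsilon>1<..<\<epsilon>1} a \<and> C1_on_real {-\<epsilon>1<..<\<epsilon>1} b \<and> C1_on_real {-\<epsilon>1<..<\<epsilon>1} l \<and>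
    a 0 = 0 \<and> b 0 = 0 \<and> l 0 = 0 \<and>
    (\<forall>e\<in>{-\<epsilon>1<..<\<epsilon>1}. \<forall>x y \<mu>. \<bar>x\<bar> < \<delta> \<and> \<bar>y\<bar> < \<delta> \<and> \<bar>\<mu>\<bar> < \<delta> \<longrightarrow>
       ((fm (x, y) - \<mu> * fp (x, y) = 0 \<and> gm (x, y) - \<mu> * gp (x, y) = 0 \<and> H (x, y, e) = 0)
        \<longleftrightarrow> (x = a e \<and> y = b e \<and> \<mu> = l e))) \<and>
    (a has_real_derivative (He H 0 0 0 / Hy H 0 0 0) *
       ((py fm 0 0 * gp (0, 0) - py gm 0 0 * fp (0, 0)) /
        (px fm 0 0 * gp (0, 0) - px gm 0 0 * fp (0, 0)))) (at 0) \<and>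
    (b has_real_derivative (He H 0 0 0 / Hy H 0 0 0) * (-1)) (at 0) \<and>
    (l has_real_derivative (He H 0 0 0 / Hy H 0 0 0) *
       (- ((px fm 0 0 * py gm 0 0 - py fm 0 0 * px gm 0 0) /
           (px fm 0 0 * gp (0, 0) - px gm 0 0 * fp (0, 0))))) (at 0)"
proof -
  let ?F = "pseudo_equilibrium_system fp gp fm gm H"
  obtain D where der: "\<And>p. (?F has_derivative D p) (at p)"
    and cont: "\<And>w. continuous_on UNIV (\<lambda>p. D p w)"
    and D0: "\<And>u v m t. D ((0, 0, 0), 0) ((u, v, m), t) =
      (u * px fm 0 0 + v * py fm 0 0 - m * fp (0, 0), u * px gm 0 0 + v * py gm 0 0 - m * gp (0, 0),
       u * Hx H 0 0 0 + v * Hy H 0 0 0 + t * He H 0 0 0)"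
    using pseudo_equilibrium_system_continuously_differentiable[OF assms(1-5)] by blast
  have D0_zero_iff: "D ((0, 0, 0), 0) ((u, v, m), t) = 0 \<longleftrightarrow>
      u = t * (He H 0 0 0 / Hy H 0 0 0 *
        ((py fm 0 0 * gp (0, 0) - py gm 0 0 * fp (0, 0)) / (px fm 0 0 * gp (0, 0) - px gm 0 0 * fp (0, 0)))) \<and>
      v = t * (He H 0 0 0 / Hy H 0 0 0 * (-1)) \<and>
      m = t * (He H 0 0 0 / Hy H 0 0 0 *
        (- ((px fm 0 0 * py gm 0 0 - py fm 0 0 * px gm 0 0) / (px fm 0 0 * gp (0, 0) - px gm 0 0 * fp (0, 0)))))"
    for u v m t
    unfolding D0 zero_prod_def prod.inject using pseudo_equilibrium_linearization_solution[OF Hx0 Hy0 det]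
    by blast
  have "?F (0, 0) = 0"
    by (simp add: pseudo_equilibrium_system_def zero_prod_def fm0 gm0 H0)
  moreover have "v = 0" if "D (0, 0) (v, 0) = 0" for v
    using that D0_zero_iff[of "fst v" "fst (snd v)" "snd (snd v)" 0] by (simp add: zero_prod_def prod_eq_iff)
  ultimately obtain \<rho> \<epsilon> \<psi> \<psi>' where "\<rho> > 0" "\<epsilon> > 0" "\<psi> 0 = 0"
    and sol: "\<And>e. \<bar>e\<bar> < \<epsilon> \<Longrightarrow> norm (\<psi> e) < \<rho>/4 \<and> ?F (\<psi> e, e) = 0"
    and unique: "\<And>e z. \<bar>e\<bar> < \<epsilon> \<Longrightarrow> norm z < \<rho> \<Longrightarrow> ?F (z, e) = 0 \<Longrightarrow> z = \<psi> e"
    and der\<psi>: "\<And>e. \<bar>e\<bar> < \<epsilon> \<Longrightarrow> (\<psi> has_vector_derivative \<psi>' e) (at e)"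
    and tangent: "\<And>e. \<bar>e\<bar> < \<epsilon> \<Longrightarrow> D (\<psi> e, e) (\<psi>' e, 1) = 0"
    and "continuous_on {-\<epsilon><..<\<epsilon>} \<psi>'"
    using implicit_function_theorem_real_parameter[OF der cont] by blast
  define \<delta> where "\<delta> = \<rho>/3"
  define a where "a e = fst (\<psi> e)" for e
  define b where "b e = fst (snd (\<psi> e))" for e
  define l where "l e = snd (snd (\<psi> e))" for e
  have unique_abl: "\<forall>e\<in>{-\<epsilon><..<\<epsilon>}. \<forall>x y \<mu>. \<bar>x\<bar> < \<delta> \<and> \<bar>y\<bar> < \<delta> \<and> \<bar>\<mu>\<bar> < \<delta> \<longrightarrow>
      ((fm (x, y) - \<mu> * fp (x, y) = 0 \<and> gm (x, y) - \<mu> * gp (x, y) = 0 \<and> H (x, y, e) = 0)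
        \<longleftrightarrow> (x = a e \<and> y = b e \<and> \<mu> = l e))"
  proof (intro ballI allI impI)
    fix e x y \<mu>
    assume "e \<in> {-\<epsilon><..<\<epsilon>}" and small: "\<bar>x\<bar> < \<delta> \<and> \<bar>y\<bar> < \<delta> \<and> \<bar>\<mu>\<bar> < \<delta>"
    then have e: "\<bar>e\<bar> < \<epsilon>"
      by (simp add: abs_less_iff)
    have "norm (x, y, \<mu>) < \<rho>"
      using norm_Pair_le[of x "(y, \<mu>)"] norm_Pair_le[of y \<mu>] small by (simp add: \<delta>_def)
    then show "(fm (x, y) - \<mu> * fp (x, y) = 0 \<and> gm (x, y) - \<mu> * gp (x, y) = 0 \<and> H (x, y, e) = 0)
        \<longleftrightarrow> (x = a e \<and> y = b e \<and> \<mu> = l e)"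
      using unique[OF e] sol[OF e] unfolding a_def b_def l_def
      by (cases "\<psi> e") (auto simp: pseudo_equilibrium_system_def zero_prod_def)
  qed
  have \<psi>'0: "\<psi>' 0 = (He H 0 0 0 / Hy H 0 0 0 *
        ((py fm 0 0 * gp (0, 0) - py gm 0 0 * fp (0, 0)) / (px fm 0 0 * gp (0, 0) - px gm 0 0 * fp (0, 0))),
      He H 0 0 0 / Hy H 0 0 0 * (-1),
      He H 0 0 0 / Hy H 0 0 0 *
        (- ((px fm 0 0 * py gm 0 0 - py fm 0 0 * px gm 0 0) / (px fm 0 0 * gp (0, 0) - px gm 0 0 * fp (0, 0)))))"
    using tangent[of 0] \<open>\<epsilon> > 0\<close> \<open>\<psi> 0 = 0\<close>
      D0_zero_iff[of "fst (\<psi>' 0)" "fst (snd (\<psi>' 0))" "snd (snd (\<psi>' 0))" 1]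
    by (simp add: zero_prod_def prod_eq_iff)
  have C1_component: "C1_on_real {-\<epsilon><..<\<epsilon>} (\<lambda>e. \<pi> (\<psi> e))"
    and der_component: "((\<lambda>e. \<pi> (\<psi> e)) has_real_derivative \<pi> (\<psi>' 0)) (at 0)" if "bounded_linear \<pi>" for \<pi>
    using der\<psi> \<open>continuous_on {-\<epsilon><..<\<epsilon>} \<psi>'\<close> \<open>\<epsilon> > 0\<close> that
    by (intro C1_on_real_bounded_linear_image has_real_derivative_bounded_linear_image;
        simp add: abs_less_iff)+
  have components: "bounded_linear fst" "bounded_linear (\<lambda>z. fst (snd z))" "bounded_linear (\<lambda>z. snd (snd z))"
    by (intro bounded_linear_fst bounded_linear_compose[OF bounded_linear_fst]
        bounded_linear_compose[OF bounded_linear_snd] bounded_linear_snd)+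
  have "\<delta> > 0" "a 0 = 0" "b 0 = 0" "l 0 = 0"
    using \<open>\<rho> > 0\<close> \<open>\<psi> 0 = 0\<close> by (simp_all add: \<delta>_def a_def b_def l_def)
  then show ?thesis
    using \<open>\<epsilon> > 0\<close> unique_abl C1_component[OF components(1), folded a_def] C1_component[OF components(2), folded b_def]
      C1_component[OF components(3), folded l_def]
      der_component[OF components(1), folded a_def, unfolded \<psi>'0 fst_conv]
      der_component[OF components(2), folded b_def, unfolded \<psi>'0 snd_conv fst_conv]
      der_component[OF components(3), folded l_def, unfolded \<psi>'0 snd_conv]
    by (intro exI[of _ \<delta>] exI[of _ \<epsilon>] exI[of _ a] exI[of _ b] exI[of _ l] conjI) assumption+
qed

theorem proposition1:
  fixes fp gp fm gm :: "real \<times> real \<Rightarrow> real" and H :: "real \<times> real \<times> real \<Rightarrow> real"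
  assumes "C2 fp" "C2 gp" "C2 fm" "C2 gm" "C2 H"
    and "fm (0, 0) = 0" "gm (0, 0) = 0" "H (0, 0, 0) = 0"
    and "Hx H 0 0 0 = 0" "Hy H 0 0 0 \<noteq> 0"
    and "Hy H 0 0 0 * gp (0, 0) < 0"
    and "px gm 0 0 \<noteq> 0"
    and "px fm 0 0 * gp (0, 0) - px gm 0 0 * fp (0, 0) \<noteq> 0"
  shows "\<exists>r>0. \<exists>\<epsilon>0>0. \<exists>A B.
     C1_on_real {0..\<epsilon>0} A \<and> C1_on_real {0..\<epsilon>0} B \<and> A 0 = 0 \<and> B 0 = 0 \<and>
     (\<forall>e\<in>{0<..\<epsilon>0}. A e \<in> {-r..r} \<and> B e \<in> {-r..r} \<and>
        (\<forall>x\<in>{-r..r}. \<forall>y\<in>{-r..r}.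
           (H (x, y, e) = 0 \<and> Hx H x y e * fm (x, y) + Hy H x y e * gm (x, y) = 0)
           \<longleftrightarrow> (x = A e \<and> y = B e))) \<and>
     (A has_real_derivative (He H 0 0 0 / Hy H 0 0 0) * (py gm 0 0 / px gm 0 0)) (at 0 within {0..\<epsilon>0}) \<and>
     (B has_real_derivative (He H 0 0 0 / Hy H 0 0 0) * (-1)) (at 0 within {0..\<epsilon>0}) \<and>
     (\<forall>e\<in>{0<..\<epsilon>0}.
        {p \<in> {-r..r} \<times> {-r..r}. H (fst p, snd p, e) = 0} - {(A e, B e)} =
        {p \<in> {-r..r} \<times> {-r..r}. H (fst p, snd p, e) = 0 \<and>
            Hx H (fst p) (snd p) e * fm p + Hy H (fst p) (snd p) e * gm p > 0}
        \<union> {p \<in> {-r..r} \<times> {-r..r}. H (fst p, snd p, e) = 0 \<and>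
            Hx H (fst p) (snd p) e * fm p + Hy H (fst p) (snd p) e * gm p < 0}) \<and>
     (\<exists>\<delta>>0. \<exists>\<epsilon>1>0. \<exists>a b l.
        C1_on_real {-\<epsilon>1<..<\<epsilon>1} a \<and> C1_on_real {-\<epsilon>1<..<\<epsilon>1} b \<and> C1_on_real {-\<epsilon>1<..<\<epsilon>1} l \<and>
        a 0 = 0 \<and> b 0 = 0 \<and> l 0 = 0 \<and>
        (\<forall>e\<in>{-\<epsilon>1<..<\<epsilon>1}. \<forall>x y \<mu>. \<bar>x\<bar> < \<delta> \<and> \<bar>y\<bar> < \<delta> \<and> \<bar>\<mu>\<bar> < \<delta> \<longrightarrow>
           ((fm (x, y) - \<mu> * fp (x, y) = 0 \<and> gm (x, y) - \<mu> * gp (x, y) = 0 \<and> H (x, y, e) = 0)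
            \<longleftrightarrow> (x = a e \<and> y = b e \<and> \<mu> = l e))) \<and>
        (a has_real_derivative (He H 0 0 0 / Hy H 0 0 0) *
           ((py fm 0 0 * gp (0, 0) - py gm 0 0 * fp (0, 0)) /
            (px fm 0 0 * gp (0, 0) - px gm 0 0 * fp (0, 0)))) (at 0) \<and>
        (b has_real_derivative (He H 0 0 0 / Hy H 0 0 0) * (-1)) (at 0) \<and>
        (l has_real_derivative (He H 0 0 0 / Hy H 0 0 0) *
           (- ((px fm 0 0 * py gm 0 0 - py fm 0 0 * px gm 0 0) /
               (px fm 0 0 * gp (0, 0) - px gm 0 0 * fp (0, 0))))) (at 0))"
proof -
  have C1: "C1 fp" "C1 gp" "C1 fm" "C1 gm" "C1 H"
    using assms(1-5) by (simp_all add: C2_imp_C1)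
  show ?thesis
    using tangency_point_sliding_crossing[OF C1(3,4) assms(5-10,12)]
      pseudo_equilibrium_branch[OF C1 assms(6-10,13)]
    by (elim exE conjE) (intro exI conjI; assumption)
qed

end
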